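(* Let $q$ be a nonzero complex number and let ${\mathbb F}({\rm SP}_q^{2|1})$ be the unital complex superalgebra generated by the even elements $x_+, x_-, x_+^{-1}$ and the odd element $\theta$ subject to $$x_+\theta = q\,\theta x_+,\quad \theta x_- = q\, x_-\theta,\quad x_-x_+ = q^{-2}x_+x_-,\quad \theta^2 = q^{1/2}(q-1)\,x_-x_+,\quad x_+x_+^{-1}={\bf 1}=x_+^{-1}x_+ .$$ Then ${\mathbb F}({\rm SP}_q^{2|1})$ is a $\mathbb Z_2$-graded Hopf algebra, with: (i) coproduct $\Delta:{\mathbb F}({\rm SP}_q^{2|1})\to{\mathbb F}({\rm SP}_q^{2|1})\otimes{\mathbb F}({\rm SP}_q^{2|1})$ defined by $$\Delta(x_+)=x_+\otimes x_+,\quad \Delta(\theta)=\theta\otimes{\bf 1}+{\bf 1}\otimes\theta,\quad \Delta(x_-)=x_+^{-1}\otimes x_- + x_-\otimes x_+^{-1};$$ (ii) counit $\epsilon:{\mathbb F}({\rm SP}_q^{2|1})\to\mathbb C$ given by $\epsilon(x_+)=1$, $\epsilon(\theta)=0$, $\epsilon(x_-)=0$; (iii) a $\mathbb C$-algebra antihomomorphism (coinverse) $S:{\mathbb F}({\rm SP}_q^{2|1})\to{\mathbb F}({\rm SP}_{q^{-1}}^{2|1})$ defined by $$S(x_+)=x_+^{-1},\quad S(\theta)=-\theta,\quad S(x_-)=-x_+x_-x_+ .$$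
   Context: Grades: $\tau(x_\pm)=\tau(x_+^{-1})=0$, $\tau(\theta)=1$. For superalgebras the tensor product ${\mathbb A}\otimes{\mathbb A}$ has the product $(a_1\otimes a_2)(a_3\otimes a_4)=(-1)^{\tau(a_2)\tau(a_3)}a_1a_3\otimes a_2a_4$ for homogeneous elements. A $\mathbb Z_2$-graded (super-)Hopf algebra is a superalgebra ${\mathbb A}$ with linear maps $\Delta,\epsilon,S$ satisfying coassociativity $(\Delta\otimes{\rm id})\Delta=({\rm id}\otimes\Delta)\Delta$, the counit axiom $m(\epsilon\otimes{\rm id})\Delta={\rm id}=m({\rm id}\otimes\epsilon)\Delta$, the antipode axiom $m(S\otimes{\rm id})\Delta=\eta\epsilon=m({\rm id}\otimes S)\Delta$ (with $m$ the product and $\eta$ the unit map), $\Delta({\bf 1})={\bf 1}\otimes{\bf 1}$, $\epsilon({\bf 1})=1$, $S({\bf 1})={\bf 1}$, and $\Delta(ab)=\Delta(a)\Delta(b)$, $\epsilon(ab)=\epsilon(a)\epsilon(b)$, $S(ab)=(-1)^{\tau(a)\tau(b)}S(b)S(a)$. ${\mathbb F}({\rm SP}_{q^{-1}}^{2|1})$ denotes the same construction with $q$ replaced by $q^{-1}$. *)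

theory Defs
  imports Complex_Main "HOL-Library.Poly_Mapping"
begin

definition cmul :: "complex \<Rightarrow> ('i \<Rightarrow>\<^sub>0 complex) \<Rightarrow> ('i \<Rightarrow>\<^sub>0 complex)" where
  "cmul c f = Poly_Mapping.map (\<lambda>x. c * x) f"

definition lin :: "('i \<Rightarrow> ('j \<Rightarrow>\<^sub>0 complex)) \<Rightarrow> ('i \<Rightarrow>\<^sub>0 complex) \<Rightarrow> ('j \<Rightarrow>\<^sub>0 complex)" where
  "lin \<phi> f = (\<Sum>u\<in>Poly_Mapping.keys f. cmul (Poly_Mapping.lookup f u) (\<phi> u))"

definition linf :: "('i \<Rightarrow> complex) \<Rightarrow> ('i \<Rightarrow>\<^sub>0 complex) \<Rightarrow> complex" where
  "linf \<phi> f = (\<Sum>u\<in>Poly_Mapping.keys f. Poly_Mapping.lookup f u * \<phi> u)"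

text \<open>Bilinear extension of a product given on basis elements:
  the product of basis elements u, v is the scalar fst (m u v) times the basis element snd (m u v).\<close>
definition bmul :: "('i \<Rightarrow> 'i \<Rightarrow> complex \<times> 'i) \<Rightarrow> ('i \<Rightarrow>\<^sub>0 complex) \<Rightarrow> ('i \<Rightarrow>\<^sub>0 complex) \<Rightarrow> ('i \<Rightarrow>\<^sub>0 complex)" where
  "bmul m f g = (\<Sum>u\<in>Poly_Mapping.keys f. \<Sum>v\<in>Poly_Mapping.keys g.
       cmul (Poly_Mapping.lookup f u * Poly_Mapping.lookup g v * fst (m u v)) (Poly_Mapping.single (snd (m u v)) 1))"

inductive_set cspan :: "('i \<Rightarrow>\<^sub>0 complex) set \<Rightarrow> ('i \<Rightarrow>\<^sub>0 complex) set" for S where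
  zero: "0 \<in> cspan S"
| step: "s \<in> S \<Longrightarrow> x \<in> cspan S \<Longrightarrow> cmul c s + x \<in> cspan S"

datatype gen = Xp | Xm | Xi | Th   \<comment> \<open>x_+, x_-, x_+^{-1}, theta\<close>

type_synonym word = "gen list"

text \<open>Grade tau: theta is odd, the other generators even.  The parity of a word is the number
  of thetas (mod 2); signs (-1)^(tau a * tau b) are computed from these counts.\<close>
definition par :: "word \<Rightarrow> nat" where
  "par w = length (filter (\<lambda>g. g = Th) w)"

definition ksign :: "word \<Rightarrow> word \<Rightarrow> complex" where
  "ksign a b = (-1) ^ (par a * par b)"

text \<open>Free associative algebra C<x_+,x_-,x_+^{-1},theta>: basis = words, product = concatenation.\<close>
definition m1 :: "word \<Rightarrow> word \<Rightarrow> complex \<times> word" where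
  "m1 u v = (1, u @ v)"

abbreviation fmul :: "(word \<Rightarrow>\<^sub>0 complex) \<Rightarrow> (word \<Rightarrow>\<^sub>0 complex) \<Rightarrow> (word \<Rightarrow>\<^sub>0 complex)" where
  "fmul \<equiv> bmul m1"

definition w :: "word \<Rightarrow> (word \<Rightarrow>\<^sub>0 complex)" where
  "w u = Poly_Mapping.single u 1"

abbreviation one1 :: "word \<Rightarrow>\<^sub>0 complex" where "one1 \<equiv> w []"

text \<open>Graded (super) tensor products of the free algebra with itself (two and three factors):
  basis = pairs/triples of words, product with the Koszul sign rule
  (a1 x a2)(a3 x a4) = (-1)^(tau a2 tau a3) a1a3 x a2a4.\<close>
definition m2 :: "word \<times> word \<Rightarrow> word \<times> word \<Rightarrow> complex \<times> (word \<times> word)" where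
  "m2 a b = (case (a, b) of ((a1, a2), (b1, b2)) \<Rightarrow> (ksign a2 b1, (a1 @ b1, a2 @ b2)))"

definition m3 :: "word \<times> word \<times> word \<Rightarrow> word \<times> word \<times> word \<Rightarrow> complex \<times> (word \<times> word \<times> word)" where
  "m3 a b = (case (a, b) of ((a1, a2, a3), (b1, b2, b3)) \<Rightarrow>
      (ksign a2 b1 * ksign a3 b1 * ksign a3 b2, (a1 @ b1, a2 @ b2, a3 @ b3)))"

definition rels :: "complex \<Rightarrow> (word \<Rightarrow>\<^sub>0 complex) set" where
  "rels q = {
     w [Xp, Th] - cmul q (w [Th, Xp]),
     w [Th, Xm] - cmul q (w [Xm, Th]),
     w [Xm, Xp] - cmul (inverse (q ^ 2)) (w [Xp, Xm]),
     w [Th, Th] - cmul (csqrt q * (q - 1)) (w [Xm, Xp]),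
     w [Xp, Xi] - one1,
     w [Xi, Xp] - one1 }"

definition Iq :: "complex \<Rightarrow> (word \<Rightarrow>\<^sub>0 complex) set" where
  "Iq q = cspan {lin (\<lambda>v. w (a @ v @ b)) r | a b r. r \<in> rels q}"

text \<open>Kernels of F\<otimes>F \<rightarrow> A\<otimes>A and F\<otimes>F\<otimes>F \<rightarrow> A\<otimes>A\<otimes>A (A = F / Iq q).\<close>
definition K2 :: "complex \<Rightarrow> (word \<times> word \<Rightarrow>\<^sub>0 complex) set" where
  "K2 q = cspan ({lin (\<lambda>u. Poly_Mapping.single (u, v) 1) i | i v. i \<in> Iq q}
               \<union> {lin (\<lambda>u. Poly_Mapping.single (v, u) 1) i | i v. i \<in> Iq q})"

definition K3 :: "complex \<Rightarrow> (word \<times> word \<times> word \<Rightarrow>\<^sub>0 complex) set" where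
  "K3 q = cspan ({lin (\<lambda>u. Poly_Mapping.single (u, v, x) 1) i | i v x. i \<in> Iq q}
               \<union> {lin (\<lambda>u. Poly_Mapping.single (v, u, x) 1) i | i v x. i \<in> Iq q}
               \<union> {lin (\<lambda>u. Poly_Mapping.single (v, x, u) 1) i | i v x. i \<in> Iq q})"

definition w2 :: "word \<Rightarrow> word \<Rightarrow> (word \<times> word \<Rightarrow>\<^sub>0 complex)" where
  "w2 a b = Poly_Mapping.single (a, b) 1"

text \<open>Values on x_+^{-1} are forced by multiplicativity and x_+ x_+^{-1} = 1.\<close>
fun Dg :: "gen \<Rightarrow> (word \<times> word \<Rightarrow>\<^sub>0 complex)" where
  "Dg Xp = w2 [Xp] [Xp]"
| "Dg Th = w2 [Th] [] + w2 [] [Th]"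
| "Dg Xm = w2 [Xi] [Xm] + w2 [Xm] [Xi]"
| "Dg Xi = w2 [Xi] [Xi]"

definition Dw :: "word \<Rightarrow> (word \<times> word \<Rightarrow>\<^sub>0 complex)" where
  "Dw u = foldr (\<lambda>g acc. bmul m2 (Dg g) acc) u (w2 [] [])"

definition Delta :: "(word \<Rightarrow>\<^sub>0 complex) \<Rightarrow> (word \<times> word \<Rightarrow>\<^sub>0 complex)" where
  "Delta = lin Dw"

fun eg :: "gen \<Rightarrow> complex" where
  "eg Xp = 1" | "eg Th = 0" | "eg Xm = 0" | "eg Xi = 1"

definition ew :: "word \<Rightarrow> complex" where
  "ew u = prod_list (map eg u)"

definition eps :: "(word \<Rightarrow>\<^sub>0 complex) \<Rightarrow> complex" where
  "eps = linf ew"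

fun Sg :: "gen \<Rightarrow> (word \<Rightarrow>\<^sub>0 complex)" where
  "Sg Xp = w [Xi]"
| "Sg Th = - w [Th]"
| "Sg Xm = - w [Xp, Xm, Xp]"
| "Sg Xi = w [Xp]"

fun Sw :: "word \<Rightarrow> (word \<Rightarrow>\<^sub>0 complex)" where
  "Sw [] = one1"
| "Sw (g # u) = cmul (ksign [g] u) (fmul (Sw u) (Sg g))"

definition S :: "(word \<Rightarrow>\<^sub>0 complex) \<Rightarrow> (word \<Rightarrow>\<^sub>0 complex)" where
  "S = lin Sw"

definition Delta_id :: "(word \<times> word \<Rightarrow>\<^sub>0 complex) \<Rightarrow> (word \<times> word \<times> word \<Rightarrow>\<^sub>0 complex)" where
  "Delta_id = lin (\<lambda>(u, v). lin (\<lambda>(a, b). Poly_Mapping.single (a, b, v) 1) (Dw u))"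

definition id_Delta :: "(word \<times> word \<Rightarrow>\<^sub>0 complex) \<Rightarrow> (word \<times> word \<times> word \<Rightarrow>\<^sub>0 complex)" where
  "id_Delta = lin (\<lambda>(u, v). lin (\<lambda>(a, b). Poly_Mapping.single (u, a, b) 1) (Dw v))"

definition m_eps_id :: "(word \<times> word \<Rightarrow>\<^sub>0 complex) \<Rightarrow> (word \<Rightarrow>\<^sub>0 complex)" where
  "m_eps_id = lin (\<lambda>(u, v). cmul (ew u) (w v))"

definition m_id_eps :: "(word \<times> word \<Rightarrow>\<^sub>0 complex) \<Rightarrow> (word \<Rightarrow>\<^sub>0 complex)" where
  "m_id_eps = lin (\<lambda>(u, v). cmul (ew v) (w u))"

definition m_S_id :: "(word \<times> word \<Rightarrow>\<^sub>0 complex) \<Rightarrow> (word \<Rightarrow>\<^sub>0 complex)" where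
  "m_S_id = lin (\<lambda>(u, v). fmul (Sw u) (w v))"

definition m_id_S :: "(word \<times> word \<Rightarrow>\<^sub>0 complex) \<Rightarrow> (word \<Rightarrow>\<^sub>0 complex)" where
  "m_id_S = lin (\<lambda>(u, v). fmul (w u) (Sw v))"

end

theory Submission
  imports Defs
begin

(* All structure maps are first defined on the free superalgebra F = C<x_+, x_-, x_+^-1, theta>,
   where Delta and eps are multiplicative and S is graded antimultiplicative by construction.
   Coassociativity and the counit laws then hold exactly in F: both sides are multiplicative
   and agree on the generators (for Delta (x) id and id (x) Delta, multiplicativity needs the
   Koszul signs to match, which holds because Delta preserves parity).  It remains to see that everything descends to
   A = F / I, where I is the ideal of relations: Delta, eps and S send each relation into
   K2 = ker (F (x) F -> A (x) A), resp. 0, resp. I, and since K2 and I are ideals and S reverses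
   products up to sign, they send all of I there.  The antipode laws hold only modulo I: on a
   word, m (S (x) id) Delta peels off one generator at a time, and on a generator it yields
   eps(g) 1 up to an element of I, by x_+ x_+^-1 = 1 = x_+^-1 x_+. *)

section \<open>Linear algebra of finitely supported complex vectors\<close>

abbreviation basis_vec :: "'i \<Rightarrow> ('i \<Rightarrow>\<^sub>0 complex)" where
  "basis_vec u \<equiv> Poly_Mapping.single u 1"

lemma lookup_cmul [simp]: "Poly_Mapping.lookup (cmul c f) k = c * Poly_Mapping.lookup f k"
  by (simp add: cmul_def map.rep_eq when_def)

lemma cmul_add [simp]: "cmul c (f + g) = cmul c f + cmul c g"
  and cmul_diff [simp]: "cmul c (f - g) = cmul c f - cmul c g"
  and cmul_minus [simp]: "cmul c (- f) = - cmul c f"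
  and cmul_cmul [simp]: "cmul c (cmul d f) = cmul (c * d) f"
  and cmul_zero_left [simp]: "cmul 0 f = 0"
  and cmul_zero_right [simp]: "cmul c 0 = 0"
  and cmul_one [simp]: "cmul 1 f = f"
  and cmul_minus_one: "cmul (-1) f = - f"
  and cmul_add_left: "cmul (c + d) f = cmul c f + cmul d f"
  by (auto intro!: poly_mapping_eqI simp: lookup_add lookup_minus algebra_simps)

lemma cmul_sum: "cmul c (sum F A) = (\<Sum>a\<in>A. cmul c (F a))"
  by (induction A rule: infinite_finite_induct) auto

lemma keys_cmul_subset: "Poly_Mapping.keys (cmul c f) \<subseteq> Poly_Mapping.keys f"
  by (auto simp: in_keys_iff)

lemma poly_mapping_single_induct [case_names zero add_single]:
  assumes "P 0" and "\<And>u c f. P f \<Longrightarrow> P (Poly_Mapping.single u c + f)"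
  shows "P f"
proof (induction f rule: update_induct)
  case const
  then show ?case using assms(1) .
next
  case (update f a b)
  have "Poly_Mapping.update a b f = Poly_Mapping.single a b + f"
    using update(1)
    by (intro poly_mapping_eqI)
      (auto simp: lookup_update lookup_add lookup_single when_def in_keys_iff)
  then show ?case using assms(2) update by simp
qed

lemma lin_eq_sum_superset:
  assumes "finite A" "Poly_Mapping.keys f \<subseteq> A"
  shows "lin \<phi> f = (\<Sum>u\<in>A. cmul (Poly_Mapping.lookup f u) (\<phi> u))"
  unfolding lin_def by (rule sum.mono_neutral_left) (use assms in \<open>auto simp: in_keys_iff\<close>)

lemma lin_add [simp]: "lin \<phi> (f + g) = lin \<phi> f + lin \<phi> g"
proof -
  let ?A = "Poly_Mapping.keys f \<union> Poly_Mapping.keys g"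
  have "lin \<phi> (f + g) = (\<Sum>u\<in>?A. cmul (Poly_Mapping.lookup (f + g) u) (\<phi> u))"
    by (rule lin_eq_sum_superset) (use keys_add[of f g] in auto)
  also have "\<dots> = lin \<phi> f + lin \<phi> g"
    by (simp add: lookup_add cmul_add_left sum.distrib lin_eq_sum_superset[of ?A])
  finally show ?thesis .
qed

lemma lin_cmul [simp]: "lin \<phi> (cmul c f) = cmul c (lin \<phi> f)"
proof -
  have "lin \<phi> (cmul c f) = (\<Sum>u\<in>Poly_Mapping.keys f. cmul (Poly_Mapping.lookup (cmul c f) u) (\<phi> u))"
    by (rule lin_eq_sum_superset) (auto simp: keys_cmul_subset)
  then show ?thesis by (simp add: lin_def cmul_sum)
qed

lemma lin_zero [simp]: "lin \<phi> 0 = 0"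
  by (simp add: lin_def)

lemma lin_single [simp]: "lin \<phi> (Poly_Mapping.single u c) = cmul c (\<phi> u)"
  by (cases "c = 0") (simp_all add: lin_def)

lemma lin_minus [simp]: "lin \<phi> (- f) = - lin \<phi> f"
  by (metis cmul_minus_one lin_cmul)

lemma lin_diff [simp]: "lin \<phi> (f - g) = lin \<phi> f - lin \<phi> g"
  by (metis diff_conv_add_uminus lin_add lin_minus)

lemma lin_fun_add: "lin (\<lambda>u. \<phi> u + \<psi> u) f = lin \<phi> f + lin \<psi> f"
  by (simp add: lin_def sum.distrib)

lemma lin_fun_diff: "lin (\<lambda>u. \<phi> u - \<psi> u) f = lin \<phi> f - lin \<psi> f"
  by (simp add: lin_def sum_subtractf)

lemma lin_fun_cmul: "lin (\<lambda>u. cmul c (\<phi> u)) f = cmul c (lin \<phi> f)"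
  by (simp add: lin_def cmul_sum mult.commute)

lemma lin_cong: "(\<And>u. u \<in> Poly_Mapping.keys f \<Longrightarrow> \<phi> u = \<psi> u) \<Longrightarrow> lin \<phi> f = lin \<psi> f"
  by (simp add: lin_def)

lemma lin_single_one: "lin (\<lambda>u. basis_vec u) f = f"
  by (induction f rule: poly_mapping_single_induct) (simp_all add: cmul_def)

definition clinear :: "(('i \<Rightarrow>\<^sub>0 complex) \<Rightarrow> ('j \<Rightarrow>\<^sub>0 complex)) \<Rightarrow> bool" where
  "clinear L \<longleftrightarrow> (\<forall>f g. L (f + g) = L f + L g) \<and> (\<forall>c f. L (cmul c f) = cmul c (L f))"

lemma clinear_add: "clinear L \<Longrightarrow> L (f + g) = L f + L g"
  and clinear_cmul: "clinear L \<Longrightarrow> L (cmul c f) = cmul c (L f)"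
  by (simp_all add: clinear_def)

lemma clinear_zero: "clinear L \<Longrightarrow> L 0 = 0"
  by (metis cmul_zero_left clinear_cmul)

lemma clinear_diff: "clinear L \<Longrightarrow> L (f - g) = L f - L g"
  by (metis add_diff_cancel_right' diff_add_cancel clinear_add)

lemma clinear_lin [simp]: "clinear (lin \<phi>)"
  and clinear_ident [simp]: "clinear (\<lambda>f. f)"
  and clinear_lin_comp [simp]: "clinear M \<Longrightarrow> clinear (\<lambda>f. lin \<phi> (M f))"
  and clinear_cmul_comp [simp]: "clinear M \<Longrightarrow> clinear (\<lambda>f. cmul c (M f))"
  by (simp_all add: clinear_def mult.commute)

lemma clinear_comp: "clinear L \<Longrightarrow> clinear M \<Longrightarrow> clinear (\<lambda>f. L (M f))"
  by (simp add: clinear_def)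

lemma lin_comp: "clinear L \<Longrightarrow> L (lin \<phi> f) = lin (\<lambda>u. L (\<phi> u)) f"
  by (induction f rule: poly_mapping_single_induct)
    (simp_all add: clinear_zero clinear_add clinear_cmul)

lemma clinear_eq_lin: "clinear L \<Longrightarrow> L f = lin (\<lambda>u. L (basis_vec u)) f"
  using lin_comp[of L "\<lambda>u. basis_vec u" f] by (simp add: lin_single_one)

lemma clinear_eq_on_keys:
  assumes "clinear L" "clinear M"
    and "\<And>u. u \<in> Poly_Mapping.keys f \<Longrightarrow> L (basis_vec u) = M (basis_vec u)"
  shows "L f = M f"
proof -
  have "L f = lin (\<lambda>u. L (basis_vec u)) f"
    using assms(1) by (rule clinear_eq_lin)
  also have "\<dots> = lin (\<lambda>u. M (basis_vec u)) f"
    using assms(3) by (rule lin_cong)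
  also have "\<dots> = M f"
    using assms(2) by (rule clinear_eq_lin[symmetric])
  finally show ?thesis .
qed

lemma clinear_ext:
  assumes "clinear L" "clinear M" "\<And>u. L (basis_vec u) = M (basis_vec u)"
  shows "L = M"
  using clinear_eq_on_keys[OF assms(1,2)] assms(3) by blast

lemma linf_eq_sum_superset:
  assumes "finite A" "Poly_Mapping.keys f \<subseteq> A"
  shows "linf \<phi> f = (\<Sum>u\<in>A. Poly_Mapping.lookup f u * \<phi> u)"
  unfolding linf_def by (rule sum.mono_neutral_left) (use assms in \<open>auto simp: in_keys_iff\<close>)

lemma linf_add [simp]: "linf \<phi> (f + g) = linf \<phi> f + linf \<phi> g"
proof -
  let ?A = "Poly_Mapping.keys f \<union> Poly_Mapping.keys g"
  have "linf \<phi> (f + g) = (\<Sum>u\<in>?A. Poly_Mapping.lookup (f + g) u * \<phi> u)"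
    by (rule linf_eq_sum_superset) (use keys_add[of f g] in auto)
  also have "\<dots> = linf \<phi> f + linf \<phi> g"
    by (simp add: lookup_add distrib_right sum.distrib linf_eq_sum_superset[of ?A])
  finally show ?thesis .
qed

lemma linf_cmul [simp]: "linf \<phi> (cmul c f) = c * linf \<phi> f"
proof -
  have "linf \<phi> (cmul c f) = (\<Sum>u\<in>Poly_Mapping.keys f. Poly_Mapping.lookup (cmul c f) u * \<phi> u)"
    by (rule linf_eq_sum_superset) (auto simp: keys_cmul_subset)
  then show ?thesis by (simp add: linf_def sum_distrib_left mult.assoc)
qed

lemma linf_zero [simp]: "linf \<phi> 0 = 0"
  by (simp add: linf_def)

lemma linf_single [simp]: "linf \<phi> (Poly_Mapping.single u c) = c * \<phi> u"
  by (cases "c = 0") (simp_all add: linf_def)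

lemma linf_diff [simp]: "linf \<phi> (f - g) = linf \<phi> f - linf \<phi> g"
  by (metis add_diff_cancel_right' diff_add_cancel linf_add)

lemma linf_lin: "linf \<phi> (lin \<psi> f) = linf (\<lambda>u. linf \<phi> (\<psi> u)) f"
  by (induction f rule: poly_mapping_single_induct) simp_all

lemma cmul_linf: "cmul (linf \<phi> f) x = lin (\<lambda>u. cmul (\<phi> u) x) f"
  by (induction f rule: poly_mapping_single_induct) (simp_all add: cmul_add_left mult.commute)

lemma bmul_single:
  "bmul m (Poly_Mapping.single u a) (Poly_Mapping.single v b)
    = cmul (a * b * fst (m u v)) (basis_vec (snd (m u v)))"
  by (simp add: bmul_def)

lemma bmul_lin: "bmul m f g = lin (\<lambda>u. lin (\<lambda>v. cmul (fst (m u v)) (basis_vec (snd (m u v)))) g) f"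
  by (simp add: bmul_def lin_def cmul_sum mult.assoc)

lemma keys_bmul:
  "Poly_Mapping.keys (bmul m f g)
    \<subseteq> {snd (m u v) | u v. u \<in> Poly_Mapping.keys f \<and> v \<in> Poly_Mapping.keys g}"
proof
  fix k assume k: "k \<in> Poly_Mapping.keys (bmul m f g)"
  show "k \<in> {snd (m u v) | u v. u \<in> Poly_Mapping.keys f \<and> v \<in> Poly_Mapping.keys g}"
  proof (rule ccontr)
    assume "k \<notin> {snd (m u v) | u v. u \<in> Poly_Mapping.keys f \<and> v \<in> Poly_Mapping.keys g}"
    then have "Poly_Mapping.lookup (bmul m f g) k = 0"
      unfolding bmul_def lookup_sum by (auto intro!: sum.neutral simp: lookup_single when_def)
    then show False using k by (simp add: in_keys_iff)
  qed
qed

lemma clinear_bmul_left: "clinear (\<lambda>f. bmul m f g)"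
  and clinear_bmul_right: "clinear (bmul m f)"
  by (simp_all add: bmul_lin[abs_def] clinear_def lin_fun_add lin_fun_cmul)

lemma clinear_bmul_left_comp [simp]: "clinear M \<Longrightarrow> clinear (\<lambda>f. bmul m (M f) g)"
  and clinear_bmul_right_comp [simp]: "clinear M \<Longrightarrow> clinear (\<lambda>g. bmul m f (M g))"
  using clinear_bmul_left[of m g] clinear_bmul_right[of m f] by (simp_all add: clinear_def)

lemma bmul_add_left [simp]: "bmul m (f + g) h = bmul m f h + bmul m g h"
  and bmul_diff_left [simp]: "bmul m (f - g) h = bmul m f h - bmul m g h"
  and bmul_cmul_left [simp]: "bmul m (cmul c f) h = cmul c (bmul m f h)"
  and bmul_zero_left [simp]: "bmul m 0 h = 0"
  using clinear_bmul_left[of m h]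
  by (simp_all add: clinear_add[of "\<lambda>f. bmul m f h"] clinear_diff[of "\<lambda>f. bmul m f h"]
      clinear_cmul[of "\<lambda>f. bmul m f h"] clinear_zero[of "\<lambda>f. bmul m f h"])

lemma bmul_add_right [simp]: "bmul m h (f + g) = bmul m h f + bmul m h g"
  and bmul_diff_right [simp]: "bmul m h (f - g) = bmul m h f - bmul m h g"
  and bmul_cmul_right [simp]: "bmul m h (cmul c f) = cmul c (bmul m h f)"
  and bmul_zero_right [simp]: "bmul m h 0 = 0"
  using clinear_bmul_right[of m h]
  by (simp_all add: clinear_add clinear_diff clinear_cmul clinear_zero)

lemma bmul_minus_left [simp]: "bmul m (- f) h = - bmul m f h"
  and bmul_minus_right [simp]: "bmul m h (- f) = - bmul m h f"
  by (simp_all flip: cmul_minus_one)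

lemma bmul_assoc_from_basis:
  assumes "\<And>u v x. bmul m (bmul m (basis_vec u) (basis_vec v)) (basis_vec x)
     = bmul m (basis_vec u) (bmul m (basis_vec v) (basis_vec x))"
  shows "bmul m (bmul m f g) h = bmul m f (bmul m g h)"
proof -
  have "(\<lambda>f. bmul m (bmul m f (basis_vec v)) (basis_vec x))
      = (\<lambda>f. bmul m f (bmul m (basis_vec v) (basis_vec x)))" for v x
    by (rule clinear_ext) (simp_all add: assms)
  then have "(\<lambda>g. bmul m (bmul m f g) (basis_vec x))
      = (\<lambda>g. bmul m f (bmul m g (basis_vec x)))" for x
    by (intro clinear_ext) (simp_all add: fun_eq_iff)
  then have "(\<lambda>h. bmul m (bmul m f g) h) = (\<lambda>h. bmul m f (bmul m g h))"
    by (intro clinear_ext) (simp_all add: fun_eq_iff)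
  then show ?thesis
    by (simp add: fun_eq_iff)
qed

lemma bmul_multiplicative_from_basis:
  assumes "clinear L"
    and "\<And>u v. L (bmul m (basis_vec u) (basis_vec v)) = bmul m' (L (basis_vec u)) (L (basis_vec v))"
  shows "L (bmul m f g) = bmul m' (L f) (L g)"
proof -
  have "(\<lambda>f. L (bmul m f (basis_vec v))) = (\<lambda>f. bmul m' (L f) (L (basis_vec v)))" for v
    by (rule clinear_ext) (simp_all add: assms clinear_comp[OF assms(1) clinear_bmul_left])
  then have "(\<lambda>g. L (bmul m f g)) = (\<lambda>g. bmul m' (L f) (L g))"
    by (intro clinear_ext)
      (simp_all add: assms clinear_comp[OF assms(1) clinear_bmul_right] fun_eq_iff)
  then show ?thesis
    by (simp add: fun_eq_iff)
qed

lemma cspan_base: "s \<in> A \<Longrightarrow> s \<in> cspan A"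
  using cspan.step[OF _ cspan.zero, of s A 1] by simp

lemma cspan_add: "x \<in> cspan A \<Longrightarrow> y \<in> cspan A \<Longrightarrow> x + y \<in> cspan A"
  by (induction x rule: cspan.induct) (auto simp: add.assoc intro: cspan.step)

lemma cspan_cmul: "x \<in> cspan A \<Longrightarrow> cmul c x \<in> cspan A"
  by (induction x rule: cspan.induct) (auto intro: cspan.step cspan.zero)

lemma cspan_minus: "x \<in> cspan A \<Longrightarrow> - x \<in> cspan A"
  by (metis cmul_minus_one cspan_cmul)

lemma cspan_diff: "x \<in> cspan A \<Longrightarrow> y \<in> cspan A \<Longrightarrow> x - y \<in> cspan A"
  by (metis cspan_add cspan_minus diff_conv_add_uminus)

lemma lin_in_cspan: "(\<And>u. \<phi> u \<in> cspan A) \<Longrightarrow> lin \<phi> f \<in> cspan A"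
  by (induction f rule: poly_mapping_single_induct) (auto intro: cspan.zero cspan_add cspan_cmul)

lemma clinear_image_cspan:
  assumes "clinear L" "\<And>s. s \<in> A \<Longrightarrow> L s \<in> cspan B" "f \<in> cspan A"
  shows "L f \<in> cspan B"
  using assms(3)
proof (induction f rule: cspan.induct)
  case zero
  then show ?case using clinear_zero[OF assms(1)] cspan.zero by simp
next
  case (step s x c)
  then show ?case using assms by (simp add: clinear_add clinear_cmul cspan_add cspan_cmul)
qed

lemma bmul_in_cspan_left:
  assumes "\<And>u. bmul m (basis_vec u) g \<in> cspan A"
  shows "bmul m f g \<in> cspan A"
  using clinear_eq_lin[OF clinear_bmul_left[of m g], of f] assms by (simp add: lin_in_cspan)

lemma bmul_in_cspan_right:
  assumes "\<And>v. bmul m f (basis_vec v) \<in> cspan A"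
  shows "bmul m f g \<in> cspan A"
  using clinear_eq_lin[OF clinear_bmul_right[of m f], of g] assms by (simp add: lin_in_cspan)

section \<open>The free superalgebra and its graded tensor powers\<close>

lemma par_simps [simp]:
  "par [] = 0" "par (g # u) = (if g = Th then 1 else 0) + par u" "par (a @ b) = par a + par b"
  by (auto simp: par_def)

lemma ksign_Nil [simp]: "ksign [] a = 1" "ksign a [] = 1"
  by (simp_all add: ksign_def)

lemma ksign_append [simp]:
  "ksign (a @ b) c = ksign a c * ksign b c" "ksign a (b @ c) = ksign a b * ksign a c"
  by (simp_all add: ksign_def algebra_simps power_add)

lemma ksign_commute: "ksign a b = ksign b a"
  by (simp add: ksign_def mult.commute)

lemma ksign_even: "even (par c) \<Longrightarrow> ksign b c = 1" "even (par c) \<Longrightarrow> ksign c b = 1"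
  by (simp_all add: ksign_def)

lemma ksign_by_parity:
  assumes "even (par v) = even p"
  shows "ksign a v = (-1) ^ (par a * p)" "ksign v b = (-1) ^ (p * par b)"
  using assms by (simp_all add: ksign_def minus_one_power_iff)

definition homogeneous :: "nat \<Rightarrow> (word \<Rightarrow>\<^sub>0 complex) \<Rightarrow> bool" where
  "homogeneous p f \<longleftrightarrow> (\<forall>u \<in> Poly_Mapping.keys f. even (par u) = even p)"

definition homogeneous2 :: "nat \<Rightarrow> (word \<times> word \<Rightarrow>\<^sub>0 complex) \<Rightarrow> bool" where
  "homogeneous2 p X \<longleftrightarrow> (\<forall>(a, b) \<in> Poly_Mapping.keys X. even (par a + par b) = even p)"

lemma homogeneous2_bmul:
  assumes "homogeneous2 p X" "homogeneous2 r Y"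
  shows "homogeneous2 (p + r) (bmul m2 X Y)"
  unfolding homogeneous2_def
proof (intro ballI, clarify)
  fix a b assume "(a, b) \<in> Poly_Mapping.keys (bmul m2 X Y)"
  then obtain x y x' y'
    where xy: "(x, y) \<in> Poly_Mapping.keys X" and xy': "(x', y') \<in> Poly_Mapping.keys Y"
    and ab: "a = x @ x'" "b = y @ y'"
    using keys_bmul[of m2 X Y] by (auto simp: m2_def)
  have "even (par x + par y) = even p" "even (par x' + par y') = even r"
    using assms xy xy' by (auto simp: homogeneous2_def)
  then show "even (par a + par b) = even (p + r)"
    by (simp add: ab) presburger
qed

lemma lin_w [simp]: "lin \<phi> (w u) = \<phi> u"
  and lin_w2 [simp]: "lin \<psi> (w2 a b) = \<psi> (a, b)"
  by (simp_all add: w_def w2_def)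

lemma lookup_w: "Poly_Mapping.lookup (w u) k = (if u = k then 1 else 0)"
  and lookup_w2: "Poly_Mapping.lookup (w2 a b) l = (if (a, b) = l then 1 else 0)"
  by (simp_all add: w_def w2_def lookup_single when_def)

lemma keys_w [simp]: "Poly_Mapping.keys (w u) = {u}"
  and keys_w2 [simp]: "Poly_Mapping.keys (w2 a b) = {(a, b)}"
  by (simp_all add: w_def w2_def)

lemma fmul_w [simp]: "fmul (w a) (w b) = w (a @ b)"
  by (simp add: w_def bmul_single m1_def)

lemma m2_w2 [simp]: "bmul m2 (w2 a b) (w2 c d) = cmul (ksign b c) (w2 (a @ c) (b @ d))"
  by (simp add: w2_def bmul_single m2_def)

(* From here on w and w2 are the simp normal form of basis vectors: w_def and w2_def must no
   longer be given to simp, which would loop. *)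
lemma basis_vec_word [simp]: "basis_vec u = w u"
  and basis_vec_pair [simp]: "basis_vec (a, b) = w2 a b"
  by (simp_all add: w_def w2_def)

lemma linf_w [simp]: "linf \<phi> (w u) = \<phi> u"
  and lin_w_self: "lin w f = f"
  using linf_single[of \<phi> u 1] lin_single_one[of f] by simp_all

lemma clinear_ext_word:
  fixes L M :: "(word \<Rightarrow>\<^sub>0 complex) \<Rightarrow> ('j \<Rightarrow>\<^sub>0 complex)"
  assumes "clinear L" "clinear M" "\<And>u. L (w u) = M (w u)"
  shows "L = M"
  using assms by (intro clinear_ext) simp_all

lemma clinear_ext_pair:
  fixes L M :: "(word \<times> word \<Rightarrow>\<^sub>0 complex) \<Rightarrow> ('j \<Rightarrow>\<^sub>0 complex)"
  assumes "clinear L" "clinear M" "\<And>a b. L (w2 a b) = M (w2 a b)"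
  shows "L = M"
  using assms by (intro clinear_ext) auto

lemma fmul_assoc: "fmul (fmul f g) h = fmul f (fmul g h)"
  by (rule bmul_assoc_from_basis) simp

lemma fmul_one [simp]: "fmul one1 f = f" "fmul f one1 = f"
  by (rule fun_cong[OF clinear_ext_word, where x = f], simp_all)+

lemma m2_assoc: "bmul m2 (bmul m2 X Y) Z = bmul m2 X (bmul m2 Y Z)"
  by (rule bmul_assoc_from_basis) (auto simp: mult_ac)

lemma m2_one [simp]: "bmul m2 (w2 [] []) X = X" "bmul m2 X (w2 [] []) = X"
  by (rule fun_cong[OF clinear_ext_pair, where x = X], simp_all)+

lemma Dw_simps [simp]: "Dw [] = w2 [] []" "Dw (g # u) = bmul m2 (Dg g) (Dw u)"
  by (simp_all add: Dw_def)

lemma Dw_append: "Dw (u @ v) = bmul m2 (Dw u) (Dw v)"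
  by (induction u) (simp_all add: m2_assoc)

lemma clinear_Delta [simp]: "clinear Delta"
  by (simp add: Delta_def)

lemma Delta_w [simp]: "Delta (w u) = Dw u"
  by (simp add: Delta_def)

lemma Delta_add [simp]: "Delta (f + g) = Delta f + Delta g"
  and Delta_diff [simp]: "Delta (f - g) = Delta f - Delta g"
  and Delta_cmul [simp]: "Delta (cmul c f) = cmul c (Delta f)"
  by (simp_all add: Delta_def)

lemma Delta_fmul: "Delta (fmul f g) = bmul m2 (Delta f) (Delta g)"
  by (rule bmul_multiplicative_from_basis) (simp_all add: Dw_append)

section \<open>Coassociativity\<close>

lemma homogeneous2_Dw: "homogeneous2 (par u) (Dw u)"
proof (induction u)
  case Nil
  then show ?case by (simp add: homogeneous2_def)
next
  case (Cons g u)
  have "homogeneous2 (par [g]) (Dg g)"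
    by (cases g) (auto simp: homogeneous2_def dest!: subsetD[OF keys_add])
  then show ?case using homogeneous2_bmul[OF _ Cons.IH] by simp
qed

definition rtensor3 :: "word \<Rightarrow> (word \<times> word \<Rightarrow>\<^sub>0 complex) \<Rightarrow> (word \<times> word \<times> word \<Rightarrow>\<^sub>0 complex)" where
  "rtensor3 v Z = lin (\<lambda>(a, b). basis_vec (a, b, v)) Z"

definition ltensor3 :: "word \<Rightarrow> (word \<times> word \<Rightarrow>\<^sub>0 complex) \<Rightarrow> (word \<times> word \<times> word \<Rightarrow>\<^sub>0 complex)" where
  "ltensor3 u Z = lin (\<lambda>(a, b). basis_vec (u, a, b)) Z"

lemma m3_basis [simp]:
  "bmul m3 (basis_vec (a1, a2, a3)) (basis_vec (b1, b2, b3))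
    = cmul (ksign a2 b1 * ksign a3 b1 * ksign a3 b2) (basis_vec (a1 @ b1, a2 @ b2, a3 @ b3))"
  by (simp add: bmul_single m3_def)

lemma rtensor3_bmul:
  assumes "homogeneous2 (par c) Z2"
  shows "bmul m3 (rtensor3 b Z1) (rtensor3 d Z2)
    = cmul (ksign b c) (rtensor3 (b @ d) (bmul m2 Z1 Z2))"
proof -
  have "bmul m3 (rtensor3 b (w2 x y)) (rtensor3 d Z2)
      = cmul (ksign b c) (rtensor3 (b @ d) (bmul m2 (w2 x y) Z2))"
    for x y
  proof (rule clinear_eq_on_keys[where L = "\<lambda>Z2. bmul m3 (rtensor3 b (w2 x y)) (rtensor3 d Z2)"])
    fix k assume "k \<in> Poly_Mapping.keys Z2"
    moreover obtain x' y' where k: "k = (x', y')" by fastforce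
    ultimately have "ksign b x' * ksign b y' = ksign b c"
      using assms by (auto simp: homogeneous2_def ksign_def minus_one_power_iff
          simp flip: power_add distrib_left)
    then have sign: "ksign y x' * ksign b x' * ksign b y' = ksign b c * ksign y x'"
      by (metis mult.assoc mult.commute)
    show "bmul m3 (rtensor3 b (w2 x y)) (rtensor3 d (basis_vec k))
        = cmul (ksign b c) (rtensor3 (b @ d) (bmul m2 (w2 x y) (basis_vec k)))"
      by (simp add: k rtensor3_def) (simp only: sign)
  qed (simp_all add: rtensor3_def)
  then have "(\<lambda>Z1. bmul m3 (rtensor3 b Z1) (rtensor3 d Z2))
      = (\<lambda>Z1. cmul (ksign b c) (rtensor3 (b @ d) (bmul m2 Z1 Z2)))"
    by (intro clinear_ext_pair) (simp_all add: rtensor3_def)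
  then show ?thesis
    by (simp add: fun_eq_iff)
qed

lemma ltensor3_bmul:
  assumes "homogeneous2 (par b) Z1"
  shows "bmul m3 (ltensor3 a Z1) (ltensor3 c Z2)
    = cmul (ksign b c) (ltensor3 (a @ c) (bmul m2 Z1 Z2))"
proof (rule clinear_eq_on_keys[where L = "\<lambda>Z1. bmul m3 (ltensor3 a Z1) (ltensor3 c Z2)"])
  fix k assume "k \<in> Poly_Mapping.keys Z1"
  moreover obtain x y where k: "k = (x, y)" by fastforce
  ultimately have "ksign x c * ksign y c = ksign b c"
    using assms by (auto simp: homogeneous2_def ksign_def minus_one_power_iff
        simp flip: power_add distrib_right)
  then have sign: "ksign x c * ksign y c * ksign y x' = ksign b c * ksign y x'" for x'
    by simp
  have "(\<lambda>Z2. bmul m3 (ltensor3 a (w2 x y)) (ltensor3 c Z2))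
      = (\<lambda>Z2. cmul (ksign b c) (ltensor3 (a @ c) (bmul m2 (w2 x y) Z2)))"
    by (rule clinear_ext_pair) (simp_all add: ltensor3_def, simp only: sign)
  then show "bmul m3 (ltensor3 a (basis_vec k)) (ltensor3 c Z2)
      = cmul (ksign b c) (ltensor3 (a @ c) (bmul m2 (basis_vec k) Z2))"
    by (simp add: k fun_eq_iff)
qed (simp_all add: ltensor3_def)

lemma clinear_Delta_id [simp]: "clinear Delta_id"
  and clinear_id_Delta [simp]: "clinear id_Delta"
  by (simp_all add: Delta_id_def id_Delta_def)

lemma Delta_id_w2 [simp]: "Delta_id (w2 u v) = rtensor3 v (Dw u)"
  and id_Delta_w2 [simp]: "id_Delta (w2 u v) = ltensor3 u (Dw v)"
  by (simp_all add: Delta_id_def id_Delta_def rtensor3_def ltensor3_def)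

lemma Delta_id_bmul: "Delta_id (bmul m2 X Y) = bmul m3 (Delta_id X) (Delta_id Y)"
  by (rule bmul_multiplicative_from_basis)
    (auto simp: split_paired_all Dw_append rtensor3_bmul[OF homogeneous2_Dw]
      clinear_cmul[OF clinear_Delta_id])

lemma id_Delta_bmul: "id_Delta (bmul m2 X Y) = bmul m3 (id_Delta X) (id_Delta Y)"
  by (rule bmul_multiplicative_from_basis)
    (auto simp: split_paired_all Dw_append ltensor3_bmul[OF homogeneous2_Dw]
      clinear_cmul[OF clinear_id_Delta])

lemma coassoc_Dw: "Delta_id (Dw u) = id_Delta (Dw u)"
proof (induction u)
  case (Cons g u)
  have "Delta_id (Dg g) = id_Delta (Dg g)"
    by (cases g) (simp_all add: clinear_add[OF clinear_Delta_id] clinear_add[OF clinear_id_Delta]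
        rtensor3_def ltensor3_def add_ac)
  with Cons show ?case
    by (simp add: Delta_id_bmul id_Delta_bmul)
qed (simp add: rtensor3_def ltensor3_def)

lemma coassoc: "Delta_id (Delta f) = id_Delta (Delta f)"
  by (simp add: Delta_def lin_comp coassoc_Dw)

lemma ew_simps [simp]: "ew [] = 1" "ew (g # u) = eg g * ew u" "ew (a @ b) = ew a * ew b"
  by (simp_all add: ew_def)

lemma par_eq_0_if_ew_nonzero: "ew c \<noteq> 0 \<Longrightarrow> par c = 0"
proof (induction c)
  case (Cons g c)
  then show ?case by (cases g) auto
qed simp

lemma clinear_m_eps_id [simp]: "clinear m_eps_id"
  and clinear_m_id_eps [simp]: "clinear m_id_eps"
  by (simp_all add: m_eps_id_def m_id_eps_def)

lemma m_eps_id_w2 [simp]: "m_eps_id (w2 a b) = cmul (ew a) (w b)"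
  and m_id_eps_w2 [simp]: "m_id_eps (w2 a b) = cmul (ew b) (w a)"
  by (simp_all add: m_eps_id_def m_id_eps_def)

lemma m_eps_id_bmul: "m_eps_id (bmul m2 X Y) = fmul (m_eps_id X) (m_eps_id Y)"
proof (rule bmul_multiplicative_from_basis)
  fix u v :: "word \<times> word"
  obtain a b c d where "u = (a, b)" "v = (c, d)" by fastforce
  moreover have "ew c = 0 \<or> ksign b c = 1"
    using par_eq_0_if_ew_nonzero ksign_even by (metis even_zero)
  ultimately show "m_eps_id (bmul m2 (basis_vec u) (basis_vec v))
      = fmul (m_eps_id (basis_vec u)) (m_eps_id (basis_vec v))"
    by (auto simp: clinear_cmul[OF clinear_m_eps_id] mult.commute)
qed simp

lemma m_id_eps_bmul: "m_id_eps (bmul m2 X Y) = fmul (m_id_eps X) (m_id_eps Y)"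
proof (rule bmul_multiplicative_from_basis)
  fix u v :: "word \<times> word"
  obtain a b c d where "u = (a, b)" "v = (c, d)" by fastforce
  moreover have "ew b = 0 \<or> ksign b c = 1"
    using par_eq_0_if_ew_nonzero ksign_even by (metis even_zero)
  ultimately show "m_id_eps (bmul m2 (basis_vec u) (basis_vec v))
      = fmul (m_id_eps (basis_vec u)) (m_id_eps (basis_vec v))"
    by (auto simp: clinear_cmul[OF clinear_m_id_eps] mult.commute)
qed simp

lemma counit_left: "m_eps_id (Delta f) = f"
proof -
  have "m_eps_id (Dw u) = w u" for u
  proof (induction u)
    case (Cons g u)
    have "m_eps_id (Dg g) = w [g]"
      by (cases g) (simp_all add: clinear_add[OF clinear_m_eps_id])
    with Cons show ?case by (simp add: m_eps_id_bmul)
  qed simp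
  then show ?thesis
    by (simp add: Delta_def lin_comp lin_w_self)
qed

lemma counit_right: "m_id_eps (Delta f) = f"
proof -
  have "m_id_eps (Dw u) = w u" for u
  proof (induction u)
    case (Cons g u)
    have "m_id_eps (Dg g) = w [g]"
      by (cases g) (simp_all add: clinear_add[OF clinear_m_id_eps])
    with Cons show ?case by (simp add: m_id_eps_bmul)
  qed simp
  then show ?thesis
    by (simp add: Delta_def lin_comp lin_w_self)
qed

lemma eps_w [simp]: "eps (w u) = ew u"
  and eps_add [simp]: "eps (f + g) = eps f + eps g"
  and eps_diff [simp]: "eps (f - g) = eps f - eps g"
  and eps_cmul [simp]: "eps (cmul c f) = c * eps f"
  and eps_zero [simp]: "eps 0 = 0"
  by (simp_all add: eps_def)

lemma eps_fmul: "eps (fmul f g) = eps f * eps g"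
proof -
  have "fmul f g = lin (\<lambda>u. lin (\<lambda>v. w (u @ v)) g) f"
    by (simp add: bmul_lin m1_def)
  then have "eps (fmul f g) = linf (\<lambda>u. linf (\<lambda>v. ew u * ew v) g) f"
    by (simp add: eps_def linf_lin)
  also have "\<dots> = linf (\<lambda>u. ew u * eps g) f"
    by (simp add: eps_def linf_def sum_distrib_left mult.assoc mult.left_commute)
  also have "\<dots> = eps f * eps g"
    by (simp add: eps_def linf_def sum_distrib_right mult.assoc)
  finally show ?thesis .
qed

section \<open>The relation ideal\<close>

definition sandwich :: "word \<Rightarrow> word \<Rightarrow> (word \<Rightarrow>\<^sub>0 complex) \<Rightarrow> (word \<Rightarrow>\<^sub>0 complex)" where
  "sandwich a b r = lin (\<lambda>v. w (a @ v @ b)) r"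

lemma Iq_eq_cspan_sandwich: "Iq q = cspan {sandwich a b r | a b r. r \<in> rels q}"
  by (simp add: Iq_def sandwich_def)

lemma sandwich_in_Iq: "r \<in> rels q \<Longrightarrow> sandwich a b r \<in> Iq q"
  unfolding Iq_eq_cspan_sandwich by (rule cspan_base) blast

lemma rels_subset_Iq: "rels q \<subseteq> Iq q"
  using sandwich_in_Iq[of _ q "[]" "[]"] by (auto simp: sandwich_def lin_w_self)

lemma Iq_zero: "0 \<in> Iq q"
  and Iq_add: "f \<in> Iq q \<Longrightarrow> g \<in> Iq q \<Longrightarrow> f + g \<in> Iq q"
  and Iq_diff: "f \<in> Iq q \<Longrightarrow> g \<in> Iq q \<Longrightarrow> f - g \<in> Iq q"
  and Iq_cmul: "f \<in> Iq q \<Longrightarrow> cmul c f \<in> Iq q"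
  and Iq_minus: "f \<in> Iq q \<Longrightarrow> - f \<in> Iq q"
  and lin_in_Iq: "(\<And>u. \<phi> u \<in> Iq q) \<Longrightarrow> lin \<phi> X \<in> Iq q"
  unfolding Iq_def
  by (simp_all add: cspan.zero cspan_add cspan_diff cspan_cmul cspan_minus lin_in_cspan)

lemma clinear_image_Iq:
  assumes "clinear L" "\<And>a b r. r \<in> rels q \<Longrightarrow> L (sandwich a b r) \<in> cspan B" "f \<in> Iq q"
  shows "L f \<in> cspan B"
  using assms(3) unfolding Iq_eq_cspan_sandwich
  by (rule clinear_image_cspan[OF assms(1), rotated]) (use assms(2) in blast)

lemma clinear_Iq_subset:
  assumes "clinear L" "\<And>a b r. r \<in> rels q \<Longrightarrow> L (sandwich a b r) \<in> Iq q" "f \<in> Iq q"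
  shows "L f \<in> Iq q"
  using clinear_image_Iq[OF assms(1), of q "{sandwich a b r | a b r. r \<in> rels q}" f] assms(2,3)
  by (simp add: Iq_eq_cspan_sandwich)

lemma Iq_fmul_left: assumes "f \<in> Iq q" shows "fmul g f \<in> Iq q"
proof -
  have "fmul (w u) f \<in> Iq q" for u
  proof (rule clinear_Iq_subset[OF clinear_bmul_right _ assms])
    fix a b r assume "r \<in> rels q"
    moreover have "fmul (w u) (sandwich a b r) = sandwich (u @ a) b r"
      by (simp add: sandwich_def lin_comp[OF clinear_bmul_right])
    ultimately show "fmul (w u) (sandwich a b r) \<in> Iq q"
      by (simp add: sandwich_in_Iq)
  qed
  then show ?thesis
    using bmul_in_cspan_left[where A = "{sandwich a b r | a b r. r \<in> rels q}" and m = m1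
        and f = g and g = f]
    by (simp add: Iq_eq_cspan_sandwich)
qed

lemma Iq_fmul_right: assumes "f \<in> Iq q" shows "fmul f g \<in> Iq q"
proof -
  have "fmul f (w u) \<in> Iq q" for u
  proof (rule clinear_Iq_subset[OF clinear_bmul_left _ assms])
    fix a b r assume "r \<in> rels q"
    moreover have "fmul (sandwich a b r) (w u) = sandwich a (b @ u) r"
      by (simp add: sandwich_def lin_comp[OF clinear_bmul_left])
    ultimately show "fmul (sandwich a b r) (w u) \<in> Iq q"
      by (simp add: sandwich_in_Iq)
  qed
  then show ?thesis
    using bmul_in_cspan_right[where A = "{sandwich a b r | a b r. r \<in> rels q}" and m = m1]
    by (simp add: Iq_eq_cspan_sandwich)
qed

definition rel_xp_theta :: "complex \<Rightarrow> (word \<Rightarrow>\<^sub>0 complex)" where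
  "rel_xp_theta q = w [Xp, Th] - cmul q (w [Th, Xp])"

definition rel_theta_xm :: "complex \<Rightarrow> (word \<Rightarrow>\<^sub>0 complex)" where
  "rel_theta_xm q = w [Th, Xm] - cmul q (w [Xm, Th])"

definition rel_xm_xp :: "complex \<Rightarrow> (word \<Rightarrow>\<^sub>0 complex)" where
  "rel_xm_xp q = w [Xm, Xp] - cmul (inverse (q ^ 2)) (w [Xp, Xm])"

definition rel_theta_sq :: "complex \<Rightarrow> (word \<Rightarrow>\<^sub>0 complex)" where
  "rel_theta_sq q = w [Th, Th] - cmul (csqrt q * (q - 1)) (w [Xm, Xp])"

definition rel_xp_xi :: "word \<Rightarrow>\<^sub>0 complex" where
  "rel_xp_xi = w [Xp, Xi] - one1"

definition rel_xi_xp :: "word \<Rightarrow>\<^sub>0 complex" where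
  "rel_xi_xp = w [Xi, Xp] - one1"

definition rel_theta_xi :: "complex \<Rightarrow> (word \<Rightarrow>\<^sub>0 complex)" where
  "rel_theta_xi q = w [Th, Xi] - cmul q (w [Xi, Th])"

lemmas rel_defs = rel_xp_theta_def rel_theta_xm_def rel_xm_xp_def rel_theta_sq_def
  rel_xp_xi_def rel_xi_xp_def rel_theta_xi_def

lemmas poly_mapping_eq_pointwise =
  poly_mapping_eq_iff fun_eq_iff lookup_add lookup_minus lookup_w lookup_w2

lemma rels_eq:
  "rels q = {rel_xp_theta q, rel_theta_xm q, rel_xm_xp q, rel_theta_sq q, rel_xp_xi, rel_xi_xp}"
  by (simp add: rels_def rel_defs)

lemma rels_in_Iq:
  "rel_xp_theta q \<in> Iq q" "rel_theta_xm q \<in> Iq q" "rel_xm_xp q \<in> Iq q" "rel_theta_sq q \<in> Iq q"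
  "rel_xp_xi \<in> Iq q" "rel_xi_xp \<in> Iq q"
  using rels_subset_Iq[of q] by (simp_all add: rels_eq)

lemma rel_theta_xi_in_Iq: "rel_theta_xi q \<in> Iq q"
proof -
  \<comment> \<open>conjugate the relation \<open>x\<^sub>+ \<theta> = q \<theta> x\<^sub>+\<close> by \<open>x\<^sub>+\<^sup>-\<^sup>1\<close>\<close>
  have "rel_theta_xi q = fmul (fmul (w [Xi]) (rel_xp_theta q)) (w [Xi])
      - fmul rel_xi_xp (w [Th, Xi]) + cmul q (fmul (w [Xi, Th]) rel_xp_xi)"
    by (simp add: rel_defs poly_mapping_eq_pointwise)
  also have "\<dots> \<in> Iq q"
    by (intro Iq_add Iq_diff Iq_cmul Iq_fmul_left Iq_fmul_right rels_in_Iq)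
  finally show ?thesis .
qed

lemma homogeneous_binomial:
  assumes "even (par x) = even (par z)"
  shows "homogeneous (par x) (w x - cmul c (w z))"
proof -
  have "Poly_Mapping.keys (w x - cmul c (w z)) \<subseteq> {x, z}"
    using keys_diff[of "w x" "cmul c (w z)"] keys_cmul_subset[of c "w z"] by auto
  with assms show ?thesis
    by (auto simp: homogeneous_def)
qed

lemma rels_homogeneous: "r \<in> rels q \<Longrightarrow> \<exists>p. homogeneous p r"
  using homogeneous_binomial[of "[Xp, Th]" "[Th, Xp]" q]
    homogeneous_binomial[of "[Th, Xm]" "[Xm, Th]" q]
    homogeneous_binomial[of "[Xm, Xp]" "[Xp, Xm]" "inverse (q ^ 2)"]
    homogeneous_binomial[of "[Th, Th]" "[Xm, Xp]" "csqrt q * (q - 1)"]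
    homogeneous_binomial[of "[Xp, Xi]" "[]" 1] homogeneous_binomial[of "[Xi, Xp]" "[]" 1]
  unfolding rels_def by auto

lemma eps_sandwich: "eps (sandwich a b r) = ew a * eps r * ew b"
proof -
  have "eps (sandwich a b r) = linf (\<lambda>v. ew a * ew v * ew b) r"
    by (simp add: sandwich_def eps_def linf_lin mult.assoc)
  also have "\<dots> = ew a * eps r * ew b"
    by (simp add: eps_def linf_def sum_distrib_left sum_distrib_right mult_ac)
  finally show ?thesis .
qed

lemma eps_Iq: assumes "f \<in> Iq q" shows "eps f = 0"
proof -
  have "eps r = 0" if "r \<in> rels q" for r
    using that by (auto simp: rels_eq rel_defs)
  with assms show ?thesis
    unfolding Iq_eq_cspan_sandwich by (induction f rule: cspan.induct) (auto simp: eps_sandwich)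
qed

lemma clinear_S [simp]: "clinear S"
  by (simp add: S_def)

lemma S_w [simp]: "S (w u) = Sw u"
  and S_add [simp]: "S (f + g) = S f + S g"
  and S_diff [simp]: "S (f - g) = S f - S g"
  and S_cmul [simp]: "S (cmul c f) = cmul c (S f)"
  by (simp_all add: S_def)

lemma Sw_append: "Sw (a @ b) = cmul (ksign a b) (fmul (Sw b) (Sw a))"
proof (induction a)
  case (Cons g a)
  have "ksign (g # a) b = ksign [g] b * ksign a b"
    using ksign_append(1)[of "[g]" a b] by simp
  then show ?case
    by (simp add: Cons.IH fmul_assoc mult_ac)
qed simp

lemma S_sandwich:
  assumes "homogeneous p r"
  shows "S (sandwich a b r)
    = cmul ((-1) ^ (par a * p) * ksign a b * (-1) ^ (p * par b)) (fmul (fmul (Sw b) (S r)) (Sw a))"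
proof -
  let ?s = "(-1) ^ (par a * p) * ksign a b * (-1) ^ (p * par b)"
  have "S (sandwich a b r) = lin (\<lambda>v. Sw (a @ v @ b)) r"
    by (simp add: sandwich_def lin_comp)
  also have "\<dots> = lin (\<lambda>v. cmul ?s (fmul (fmul (Sw b) (Sw v)) (Sw a))) r"
  proof (rule lin_cong)
    fix v assume "v \<in> Poly_Mapping.keys r"
    then have "even (par v) = even p"
      using assms by (simp add: homogeneous_def)
    then show "Sw (a @ v @ b) = cmul ?s (fmul (fmul (Sw b) (Sw v)) (Sw a))"
      by (simp add: Sw_append ksign_by_parity[of v p] fmul_assoc mult_ac)
  qed
  also have "\<dots> = cmul ?s (fmul (fmul (Sw b) (S r)) (Sw a))"
    by (simp add: lin_fun_cmul S_def lin_comp[of "\<lambda>Z. fmul (fmul (Sw b) Z) (Sw a)"])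
  finally show ?thesis .
qed

lemma S_rels_Iq: "r \<in> rels q \<Longrightarrow> S r \<in> Iq q"
proof -
  have S_rels: "S (rel_xp_theta q) = - rel_theta_xi q"
    "S (rel_theta_xm q) = fmul (w [Xp, Xm]) (rel_xp_theta q)
      - fmul (fmul (w [Xp]) (rel_theta_xm q)) (w [Xp]) + fmul (rel_xp_theta q) (w [Xm, Xp])"
    "S (rel_xm_xp q) = cmul (inverse (q ^ 2)) (fmul (w [Xp, Xm]) rel_xp_xi)
      - fmul rel_xi_xp (w [Xm, Xp]) - rel_xm_xp q"
    "S (rel_theta_sq q) = cmul (csqrt q * (q - 1)) (fmul rel_xi_xp (w [Xm, Xp])) - rel_theta_sq q"
    "S rel_xp_xi = rel_xp_xi" "S rel_xi_xp = rel_xi_xp"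
    by (simp_all add: rel_defs ksign_def cmul_minus_one poly_mapping_eq_pointwise)
  have "S (rel_xp_theta q) \<in> Iq q" "S (rel_theta_xm q) \<in> Iq q" "S (rel_xm_xp q) \<in> Iq q"
    "S (rel_theta_sq q) \<in> Iq q" "S rel_xp_xi \<in> Iq q" "S rel_xi_xp \<in> Iq q"
    unfolding S_rels
    by (intro Iq_add Iq_diff Iq_minus Iq_cmul Iq_fmul_left Iq_fmul_right
        rels_in_Iq rel_theta_xi_in_Iq)+
  then show "r \<in> rels q \<Longrightarrow> S r \<in> Iq q"
    by (auto simp: rels_eq)
qed

lemma S_Iq: assumes "f \<in> Iq q" shows "S f \<in> Iq q"
proof (rule clinear_Iq_subset[OF clinear_S _ assms])
  fix a b r assume "r \<in> rels q"
  moreover from this obtain p where "homogeneous p r"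
    using rels_homogeneous by blast
  ultimately show "S (sandwich a b r) \<in> Iq q"
    by (simp add: S_sandwich Iq_cmul Iq_fmul_left Iq_fmul_right S_rels_Iq)
qed

section \<open>The coproduct respects the ideal\<close>

definition rtensor :: "word \<Rightarrow> (word \<Rightarrow>\<^sub>0 complex) \<Rightarrow> (word \<times> word \<Rightarrow>\<^sub>0 complex)" where
  "rtensor v f = lin (\<lambda>u. w2 u v) f"

definition ltensor :: "word \<Rightarrow> (word \<Rightarrow>\<^sub>0 complex) \<Rightarrow> (word \<times> word \<Rightarrow>\<^sub>0 complex)" where
  "ltensor v f = lin (\<lambda>u. w2 v u) f"

definition parity_twist :: "word \<Rightarrow> (word \<Rightarrow>\<^sub>0 complex) \<Rightarrow> (word \<Rightarrow>\<^sub>0 complex)" where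
  "parity_twist y f = lin (\<lambda>u. cmul (ksign y u) (w u)) f"

lemma rtensor_w [simp]: "rtensor v (w u) = w2 u v"
  and rtensor_add [simp]: "rtensor v (f + g) = rtensor v f + rtensor v g"
  and rtensor_diff [simp]: "rtensor v (f - g) = rtensor v f - rtensor v g"
  and rtensor_cmul [simp]: "rtensor v (cmul c f) = cmul c (rtensor v f)"
  and ltensor_w [simp]: "ltensor v (w u) = w2 v u"
  and ltensor_add [simp]: "ltensor v (f + g) = ltensor v f + ltensor v g"
  and ltensor_diff [simp]: "ltensor v (f - g) = ltensor v f - ltensor v g"
  and ltensor_cmul [simp]: "ltensor v (cmul c f) = cmul c (ltensor v f)"
  by (simp_all add: rtensor_def ltensor_def)

definition K2_gens :: "complex \<Rightarrow> (word \<times> word \<Rightarrow>\<^sub>0 complex) set" where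
  "K2_gens q = {rtensor v i | i v. i \<in> Iq q} \<union> {ltensor v i | i v. i \<in> Iq q}"

lemma K2_eq_cspan: "K2 q = cspan (K2_gens q)"
  unfolding K2_def K2_gens_def rtensor_def ltensor_def w2_def ..

lemma rtensor_in_K2: "i \<in> Iq q \<Longrightarrow> rtensor v i \<in> K2 q"
  and ltensor_in_K2: "i \<in> Iq q \<Longrightarrow> ltensor v i \<in> K2 q"
  unfolding K2_eq_cspan K2_gens_def by (rule cspan_base, blast)+

lemma K2_zero: "0 \<in> K2 q"
  and K2_add: "X \<in> K2 q \<Longrightarrow> Y \<in> K2 q \<Longrightarrow> X + Y \<in> K2 q"
  and K2_diff: "X \<in> K2 q \<Longrightarrow> Y \<in> K2 q \<Longrightarrow> X - Y \<in> K2 q"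
  and K2_cmul: "X \<in> K2 q \<Longrightarrow> cmul c X \<in> K2 q"
  unfolding K2_def by (simp_all add: cspan.zero cspan_add cspan_diff cspan_cmul)

lemma clinear_parity_twist: "clinear (parity_twist y)"
  by (simp add: parity_twist_def[abs_def])

lemma parity_twist_sandwich:
  assumes "homogeneous p r"
  shows "parity_twist y (sandwich a b r)
    = cmul (ksign y a * (-1) ^ (par y * p) * ksign y b) (sandwich a b r)"
proof -
  have "parity_twist y (sandwich a b r) = lin (\<lambda>v. cmul (ksign y (a @ v @ b)) (w (a @ v @ b))) r"
    by (simp add: parity_twist_def sandwich_def lin_comp)
  also have "\<dots> = lin (\<lambda>v. cmul (ksign y a * (-1) ^ (par y * p) * ksign y b) (w (a @ v @ b))) r"
  proof (rule lin_cong)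
    fix v assume "v \<in> Poly_Mapping.keys r"
    then have "even (par v) = even p"
      using assms by (simp add: homogeneous_def)
    then show "cmul (ksign y (a @ v @ b)) (w (a @ v @ b))
        = cmul (ksign y a * (-1) ^ (par y * p) * ksign y b) (w (a @ v @ b))"
      by (simp add: ksign_by_parity(1)[of v p] mult.assoc)
  qed
  finally show ?thesis
    by (simp add: lin_fun_cmul sandwich_def)
qed

lemma parity_twist_Iq: assumes "f \<in> Iq q" shows "parity_twist y f \<in> Iq q"
proof (rule clinear_Iq_subset[OF clinear_parity_twist _ assms])
  fix a b r assume "r \<in> rels q"
  moreover from this obtain p where "homogeneous p r"
    using rels_homogeneous by blast
  ultimately show "parity_twist y (sandwich a b r) \<in> Iq q"
    by (simp add: parity_twist_sandwich Iq_cmul sandwich_in_Iq)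
qed

lemma w2_bmul_rtensor:
    "bmul m2 (w2 x y) (rtensor v i) = rtensor (y @ v) (fmul (w x) (parity_twist y i))"
  and w2_bmul_ltensor:
    "bmul m2 (w2 x y) (ltensor v i) = cmul (ksign y v) (ltensor (x @ v) (fmul (w y) i))"
  and rtensor_bmul_w2:
    "bmul m2 (rtensor v i) (w2 x y) = cmul (ksign v x) (rtensor (v @ y) (fmul i (w x)))"
  and ltensor_bmul_w2:
    "bmul m2 (ltensor v i) (w2 x y) = ltensor (v @ x) (fmul (parity_twist x i) (w y))"
proof -
  have
    "(\<lambda>i. bmul m2 (w2 x y) (rtensor v i)) = (\<lambda>i. rtensor (y @ v) (fmul (w x) (parity_twist y i)))"
    "(\<lambda>i. bmul m2 (w2 x y) (ltensor v i)) = (\<lambda>i. cmul (ksign y v) (ltensor (x @ v) (fmul (w y) i)))"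
    "(\<lambda>i. bmul m2 (rtensor v i) (w2 x y)) = (\<lambda>i. cmul (ksign v x) (rtensor (v @ y) (fmul i (w x))))"
    "(\<lambda>i. bmul m2 (ltensor v i) (w2 x y)) = (\<lambda>i. ltensor (v @ x) (fmul (parity_twist x i) (w y)))"
    by (rule clinear_ext_word; simp add: rtensor_def ltensor_def parity_twist_def ksign_commute)+
  then show "bmul m2 (w2 x y) (rtensor v i) = rtensor (y @ v) (fmul (w x) (parity_twist y i))"
    "bmul m2 (w2 x y) (ltensor v i) = cmul (ksign y v) (ltensor (x @ v) (fmul (w y) i))"
    "bmul m2 (rtensor v i) (w2 x y) = cmul (ksign v x) (rtensor (v @ y) (fmul i (w x)))"
    "bmul m2 (ltensor v i) (w2 x y) = ltensor (v @ x) (fmul (parity_twist x i) (w y))"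
    by (simp_all add: fun_eq_iff)
qed

lemma K2_bmul_left: assumes "X \<in> K2 q" shows "bmul m2 Y X \<in> K2 q"
proof -
  have "bmul m2 (w2 x y) X \<in> K2 q" for x y
    using assms unfolding K2_eq_cspan
  proof (rule clinear_image_cspan[OF clinear_bmul_right, rotated])
    fix s assume "s \<in> K2_gens q"
    then have "bmul m2 (w2 x y) s \<in> K2 q"
      by (auto simp: K2_gens_def w2_bmul_rtensor w2_bmul_ltensor
          intro!: rtensor_in_K2 ltensor_in_K2 K2_cmul Iq_fmul_left parity_twist_Iq)
    then show "bmul m2 (w2 x y) s \<in> cspan (K2_gens q)"
      by (simp add: K2_eq_cspan)
  qed
  then show ?thesis
    using bmul_in_cspan_left[where A = "K2_gens q" and m = m2 and f = Y and g = X]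
    by (simp add: K2_eq_cspan split_paired_all)
qed

lemma K2_bmul_right: assumes "X \<in> K2 q" shows "bmul m2 X Y \<in> K2 q"
proof -
  have "bmul m2 X (w2 x y) \<in> K2 q" for x y
    using assms unfolding K2_eq_cspan
  proof (rule clinear_image_cspan[OF clinear_bmul_left, rotated])
    fix s assume "s \<in> K2_gens q"
    then have "bmul m2 s (w2 x y) \<in> K2 q"
      by (auto simp: K2_gens_def rtensor_bmul_w2 ltensor_bmul_w2
          intro!: rtensor_in_K2 ltensor_in_K2 K2_cmul Iq_fmul_right parity_twist_Iq)
    then show "bmul m2 s (w2 x y) \<in> cspan (K2_gens q)"
      by (simp add: K2_eq_cspan)
  qed
  then show ?thesis
    using bmul_in_cspan_right[where A = "K2_gens q" and m = m2 and f = X and g = Y]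
    by (simp add: K2_eq_cspan split_paired_all)
qed

lemma Delta_rels_K2: "r \<in> rels q \<Longrightarrow> Delta r \<in> K2 q"
proof -
  have Delta_rels:
    "Delta (rel_xp_theta q) = rtensor [Xp] (rel_xp_theta q) + ltensor [Xp] (rel_xp_theta q)"
    "Delta (rel_theta_xm q) = rtensor [Xm] (rel_theta_xi q) + rtensor [Xi] (rel_theta_xm q)
      + ltensor [Xi] (rel_theta_xm q) + ltensor [Xm] (rel_theta_xi q)"
    "Delta (rel_xm_xp q) = rtensor [] (rel_xm_xp q) + ltensor [] (rel_xm_xp q)
      + rtensor [Xm, Xp] rel_xi_xp + ltensor [Xm, Xp] rel_xi_xp
      - cmul (inverse (q ^ 2)) (rtensor [Xp, Xm] rel_xp_xi)
      - cmul (inverse (q ^ 2)) (ltensor [Xp, Xm] rel_xp_xi)"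
    "Delta (rel_theta_sq q) = rtensor [] (rel_theta_sq q) + ltensor [] (rel_theta_sq q)
      - cmul (csqrt q * (q - 1)) (rtensor [Xm, Xp] rel_xi_xp)
      - cmul (csqrt q * (q - 1)) (ltensor [Xm, Xp] rel_xi_xp)"
    "Delta rel_xp_xi = rtensor [Xp, Xi] rel_xp_xi + ltensor [] rel_xp_xi"
    "Delta rel_xi_xp = rtensor [Xi, Xp] rel_xi_xp + ltensor [] rel_xi_xp"
    by (simp_all add: rel_defs ksign_def cmul_minus_one poly_mapping_eq_pointwise)
  have "Delta (rel_xp_theta q) \<in> K2 q" "Delta (rel_theta_xm q) \<in> K2 q" "Delta (rel_xm_xp q) \<in> K2 q"
    "Delta (rel_theta_sq q) \<in> K2 q" "Delta rel_xp_xi \<in> K2 q" "Delta rel_xi_xp \<in> K2 q"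
    unfolding Delta_rels
    by (intro K2_add K2_diff K2_cmul rtensor_in_K2 ltensor_in_K2 rels_in_Iq rel_theta_xi_in_Iq)+
  then show "r \<in> rels q \<Longrightarrow> Delta r \<in> K2 q"
    by (auto simp: rels_eq)
qed

lemma Delta_sandwich: "Delta (sandwich a b r) = bmul m2 (bmul m2 (Dw a) (Delta r)) (Dw b)"
proof -
  have "Delta (sandwich a b r) = lin (\<lambda>v. bmul m2 (bmul m2 (Dw a) (Dw v)) (Dw b)) r"
    by (simp add: sandwich_def lin_comp Dw_append m2_assoc)
  also have "\<dots> = bmul m2 (bmul m2 (Dw a) (Delta r)) (Dw b)"
    by (simp add: Delta_def lin_comp[of "\<lambda>Z. bmul m2 (bmul m2 (Dw a) Z) (Dw b)"])
  finally show ?thesis .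
qed

lemma Delta_Iq: assumes "f \<in> Iq q" shows "Delta f \<in> K2 q"
  unfolding K2_eq_cspan
  by (rule clinear_image_Iq[OF clinear_Delta _ assms])
    (simp add: Delta_sandwich K2_bmul_left K2_bmul_right Delta_rels_K2 flip: K2_eq_cspan)

section \<open>The antipode axioms\<close>

lemma clinear_m_S_id [simp]: "clinear m_S_id"
  and clinear_m_id_S [simp]: "clinear m_id_S"
  by (simp_all add: m_S_id_def m_id_S_def)

lemma m_S_id_w2 [simp]: "m_S_id (w2 a b) = fmul (Sw a) (w b)"
  and m_S_id_add [simp]: "m_S_id (X + Y) = m_S_id X + m_S_id Y"
  and m_S_id_cmul [simp]: "m_S_id (cmul c X) = cmul c (m_S_id X)"
  and m_id_S_w2 [simp]: "m_id_S (w2 a b) = fmul (w a) (Sw b)"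
  and m_id_S_add [simp]: "m_id_S (X + Y) = m_id_S X + m_id_S Y"
  and m_id_S_cmul [simp]: "m_id_S (cmul c X) = cmul c (m_id_S X)"
  by (simp_all add: m_S_id_def m_id_S_def)

text \<open>For \<open>Z = S(a) b\<close> of parity \<open>p\<close>, \<open>m_S_id_conj p Z\<close> is the map
  \<open>Y \<mapsto> m (S \<otimes> id) ((a \<otimes> b) Y)\<close>: it sends \<open>c \<otimes> d\<close> to \<open>\<plusminus> S(c) Z d\<close>.
  Dually \<open>m_id_S_conj p Z\<close> with \<open>Z = a S(b)\<close> describes \<open>Y \<mapsto> m (id \<otimes> S) (Y (a \<otimes> b))\<close>.\<close>

definition m_S_id_conj ::
    "nat \<Rightarrow> (word \<Rightarrow>\<^sub>0 complex) \<Rightarrow> (word \<times> word \<Rightarrow>\<^sub>0 complex) \<Rightarrow> (word \<Rightarrow>\<^sub>0 complex)" where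
  "m_S_id_conj p Z = lin (\<lambda>(c, d). cmul ((-1) ^ (p * par c)) (fmul (fmul (Sw c) Z) (w d)))"

definition m_id_S_conj ::
    "nat \<Rightarrow> (word \<Rightarrow>\<^sub>0 complex) \<Rightarrow> (word \<times> word \<Rightarrow>\<^sub>0 complex) \<Rightarrow> (word \<Rightarrow>\<^sub>0 complex)" where
  "m_id_S_conj p Z = lin (\<lambda>(c, d). cmul ((-1) ^ (p * par d)) (fmul (fmul (w c) Z) (Sw d)))"

lemma m_S_id_conj_diff: "m_S_id_conj p (Z1 - Z2) Y = m_S_id_conj p Z1 Y - m_S_id_conj p Z2 Y"
  and m_id_S_conj_diff: "m_id_S_conj p (Z1 - Z2) Y = m_id_S_conj p Z1 Y - m_id_S_conj p Z2 Y"
  by (simp_all add: m_S_id_conj_def m_id_S_conj_def case_prod_unfold lin_fun_diff)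

lemma m_S_id_conj_add: "m_S_id_conj p (Z1 + Z2) Y = m_S_id_conj p Z1 Y + m_S_id_conj p Z2 Y"
  and m_id_S_conj_add: "m_id_S_conj p (Z1 + Z2) Y = m_id_S_conj p Z1 Y + m_id_S_conj p Z2 Y"
  by (simp_all add: m_S_id_conj_def m_id_S_conj_def case_prod_unfold lin_fun_add)

lemma m_S_id_conj_cmul: "m_S_id_conj p (cmul c Z) Y = cmul c (m_S_id_conj p Z Y)"
  and m_id_S_conj_cmul: "m_id_S_conj p (cmul c Z) Y = cmul c (m_id_S_conj p Z Y)"
  by (simp_all add: m_S_id_conj_def m_id_S_conj_def case_prod_unfold lin_def cmul_sum mult_ac)

lemma m_S_id_conj_one: "m_S_id_conj 0 one1 Y = m_S_id Y"
  and m_id_S_conj_one: "m_id_S_conj 0 one1 Y = m_id_S Y"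
  by (simp_all add: m_S_id_conj_def m_S_id_def m_id_S_conj_def m_id_S_def case_prod_unfold)

lemma m_S_id_conj_Iq: "Z \<in> Iq q \<Longrightarrow> m_S_id_conj p Z Y \<in> Iq q"
  unfolding m_S_id_conj_def case_prod_unfold
  by (intro lin_in_Iq Iq_cmul Iq_fmul_right[OF Iq_fmul_left])

lemma m_id_S_conj_Iq: "Z \<in> Iq q \<Longrightarrow> m_id_S_conj p Z Y \<in> Iq q"
  unfolding m_id_S_conj_def case_prod_unfold
  by (intro lin_in_Iq Iq_cmul Iq_fmul_right[OF Iq_fmul_left])

lemma m_S_id_w2_bmul:
  assumes "par a + par b = p"
  shows "m_S_id (bmul m2 (w2 a b) Y) = m_S_id_conj p (m_S_id (w2 a b)) Y"
proof -
  have "(\<lambda>Y. m_S_id (bmul m2 (w2 a b) Y)) = m_S_id_conj p (m_S_id (w2 a b))"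
  proof (rule clinear_ext_pair)
    fix c d
    have "ksign b c * ksign a c = (-1) ^ (p * par c)"
      using assms by (simp add: ksign_def add.commute flip: power_add distrib_right)
    then show "m_S_id (bmul m2 (w2 a b) (w2 c d)) = m_S_id_conj p (m_S_id (w2 a b)) (w2 c d)"
      by (simp add: m_S_id_conj_def Sw_append fmul_assoc)
  qed (simp_all add: clinear_comp[OF clinear_m_S_id clinear_bmul_right] m_S_id_conj_def)
  then show ?thesis
    by (simp add: fun_eq_iff)
qed

lemma m_id_S_bmul_w2:
  assumes "par a + par b = p"
  shows "m_id_S (bmul m2 Y (w2 a b)) = m_id_S_conj p (m_id_S (w2 a b)) Y"
proof -
  have "(\<lambda>Y. m_id_S (bmul m2 Y (w2 a b))) = m_id_S_conj p (m_id_S (w2 a b))"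
  proof (rule clinear_ext_pair)
    fix c d
    have "ksign d a * ksign d b = (-1) ^ (p * par d)"
      using assms by (simp add: ksign_def mult.commute[of "par d"] flip: power_add distrib_right)
    moreover have "fmul (w (c @ a)) X = fmul (w c) (fmul (w a) X)" for X
      by (simp add: fmul_assoc[symmetric])
    ultimately show "m_id_S (bmul m2 (w2 c d) (w2 a b)) = m_id_S_conj p (m_id_S (w2 a b)) (w2 c d)"
      by (simp add: m_id_S_conj_def Sw_append fmul_assoc)
  qed (simp_all add: clinear_comp[OF clinear_m_id_S clinear_bmul_left] m_id_S_conj_def)
  then show ?thesis
    by (simp add: fun_eq_iff)
qed

lemma m_S_id_Dg_bmul: "m_S_id (bmul m2 (Dg g) Y) = m_S_id_conj (par [g]) (m_S_id (Dg g)) Y"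
  by (cases g) (simp_all add: m_S_id_w2_bmul m_S_id_conj_add del: m_S_id_w2)

lemma m_id_S_bmul_Dg: "m_id_S (bmul m2 Y (Dg g)) = m_id_S_conj (par [g]) (m_id_S (Dg g)) Y"
  by (cases g) (simp_all add: m_id_S_bmul_w2 m_id_S_conj_add del: m_id_S_w2)

lemma par_eq_0_if_eg_nonzero: "eg g \<noteq> 0 \<Longrightarrow> par [g] = 0"
  by (cases g) simp_all

lemma m_S_id_Dg_Iq: "m_S_id (Dg g) - cmul (eg g) one1 \<in> Iq q"
proof -
  have "m_S_id (Dg Xm) = - fmul (w [Xp, Xm]) rel_xp_xi"
    by (simp add: rel_defs ksign_def poly_mapping_eq_pointwise)
  then show ?thesis
    by (cases g) (auto simp: ksign_def cmul_minus_one rel_defs[symmetric] Iq_zero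
        intro: rels_in_Iq Iq_minus Iq_fmul_left)
qed

lemma m_id_S_Dg_Iq: "m_id_S (Dg g) - cmul (eg g) one1 \<in> Iq q"
proof -
  have "m_id_S (Dg Xm) = - fmul rel_xi_xp (w [Xm, Xp])"
    by (simp add: rel_defs ksign_def poly_mapping_eq_pointwise)
  then show ?thesis
    by (cases g) (auto simp: ksign_def cmul_minus_one rel_defs[symmetric] Iq_zero
        intro: rels_in_Iq Iq_minus Iq_fmul_right)
qed

lemma m_S_id_Dw_Iq: "m_S_id (Dw u) - cmul (ew u) one1 \<in> Iq q"
proof (induction u)
  case (Cons g u)
  let ?p = "par [g]"
  have "m_S_id (Dw (g # u)) - cmul (ew (g # u)) one1
      = m_S_id_conj ?p (m_S_id (Dg g) - cmul (eg g) one1) (Dw u)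
        + cmul (eg g) (m_S_id_conj ?p one1 (Dw u) - cmul (ew u) one1)"
    by (simp add: m_S_id_Dg_bmul m_S_id_conj_diff m_S_id_conj_cmul)
  moreover have "cmul (eg g) (m_S_id_conj ?p one1 (Dw u) - cmul (ew u) one1) \<in> Iq q"
    using Iq_cmul[OF Cons.IH] par_eq_0_if_eg_nonzero[of g]
    by (cases "eg g = 0") (simp_all add: Iq_zero m_S_id_conj_one)
  moreover have "m_S_id_conj ?p (m_S_id (Dg g) - cmul (eg g) one1) (Dw u) \<in> Iq q"
    by (intro m_S_id_conj_Iq m_S_id_Dg_Iq)
  ultimately show ?case
    by (metis Iq_add add.commute)
qed (simp add: Iq_zero)

lemma m_id_S_Dw_Iq: "m_id_S (Dw u) - cmul (ew u) one1 \<in> Iq q"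
proof (induction u rule: rev_induct)
  case (snoc g u)
  let ?p = "par [g]"
  have "m_id_S (Dw (u @ [g])) - cmul (ew (u @ [g])) one1
      = m_id_S_conj ?p (m_id_S (Dg g) - cmul (eg g) one1) (Dw u)
        + cmul (eg g) (m_id_S_conj ?p one1 (Dw u) - cmul (ew u) one1)"
    by (simp add: Dw_append m_id_S_bmul_Dg m_id_S_conj_diff m_id_S_conj_cmul mult.commute)
  moreover have "cmul (eg g) (m_id_S_conj ?p one1 (Dw u) - cmul (ew u) one1) \<in> Iq q"
    using Iq_cmul[OF snoc.IH] par_eq_0_if_eg_nonzero[of g]
    by (cases "eg g = 0") (simp_all add: Iq_zero m_id_S_conj_one)
  moreover have "m_id_S_conj ?p (m_id_S (Dg g) - cmul (eg g) one1) (Dw u) \<in> Iq q"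
    by (intro m_id_S_conj_Iq m_id_S_Dg_Iq)
  ultimately show ?case
    by (metis Iq_add add.commute)
qed (simp add: Iq_zero)

lemma antipode_left: "m_S_id (Delta f) - cmul (eps f) one1 \<in> Iq q"
proof -
  have "m_S_id (Delta f) - cmul (eps f) one1 = lin (\<lambda>u. m_S_id (Dw u) - cmul (ew u) one1) f"
    by (simp add: Delta_def eps_def lin_comp cmul_linf lin_fun_diff)
  also have "\<dots> \<in> Iq q"
    by (intro lin_in_Iq m_S_id_Dw_Iq)
  finally show ?thesis .
qed

lemma antipode_right: "m_id_S (Delta f) - cmul (eps f) one1 \<in> Iq q"
proof -
  have "m_id_S (Delta f) - cmul (eps f) one1 = lin (\<lambda>u. m_id_S (Dw u) - cmul (ew u) one1) f"
    by (simp add: Delta_def eps_def lin_comp cmul_linf lin_fun_diff)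
  also have "\<dots> \<in> Iq q"
    by (intro lin_in_Iq m_id_S_Dw_Iq)
  finally show ?thesis .
qed

theorem theorem3p2:
  fixes q :: complex
  assumes "q \<noteq> 0"
  shows
    \<comment> \<open>the structure maps are well defined on F(SP_q^{2|1}) = F / Iq q\<close>
    "(\<forall>f\<in>Iq q. Delta f \<in> K2 q) \<and> (\<forall>f\<in>Iq q. eps f = 0) \<and> (\<forall>f\<in>Iq q. S f \<in> Iq q)
    \<comment> \<open>Delta, eps are unital algebra homomorphisms; S is a unital graded antihomomorphism\<close>
   \<and> (\<forall>f g. Delta (fmul f g) - bmul m2 (Delta f) (Delta g) \<in> K2 q)
   \<and> Delta one1 = w2 [] []
   \<and> (\<forall>f g. eps (fmul f g) = eps f * eps g) \<and> eps one1 = 1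
   \<and> (\<forall>a b. S (fmul (w a) (w b)) - cmul (ksign a b) (fmul (S (w b)) (S (w a))) \<in> Iq q)
   \<and> S one1 = one1
    \<comment> \<open>coassociativity\<close>
   \<and> (\<forall>f. Delta_id (Delta f) - id_Delta (Delta f) \<in> K3 q)
    \<comment> \<open>counit axiom\<close>
   \<and> (\<forall>f. m_eps_id (Delta f) - f \<in> Iq q) \<and> (\<forall>f. m_id_eps (Delta f) - f \<in> Iq q)
    \<comment> \<open>antipode axiom\<close>
   \<and> (\<forall>f. m_S_id (Delta f) - cmul (eps f) one1 \<in> Iq q)
   \<and> (\<forall>f. m_id_S (Delta f) - cmul (eps f) one1 \<in> Iq q)"
proof (intro conjI allI ballI)
  show "\<And>f. f \<in> Iq q \<Longrightarrow> Delta f \<in> K2 q" by (rule Delta_Iq)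
  show "\<And>f. f \<in> Iq q \<Longrightarrow> eps f = 0" by (rule eps_Iq)
  show "\<And>f. f \<in> Iq q \<Longrightarrow> S f \<in> Iq q" by (rule S_Iq)
  show "Delta (fmul f g) - bmul m2 (Delta f) (Delta g) \<in> K2 q" for f g
    by (simp add: Delta_fmul K2_zero)
  show "Delta one1 = w2 [] []" by simp
  show "eps (fmul f g) = eps f * eps g" for f g by (rule eps_fmul)
  show "eps one1 = 1" by simp
  show "S (fmul (w a) (w b)) - cmul (ksign a b) (fmul (S (w b)) (S (w a))) \<in> Iq q" for a b
    by (simp add: Sw_append Iq_zero)
  show "S one1 = one1" by simp
  show "Delta_id (Delta f) - id_Delta (Delta f) \<in> K3 q" for f
    by (simp add: coassoc K3_def cspan.zero)
  show "m_eps_id (Delta f) - f \<in> Iq q" for f by (simp add: counit_left Iq_zero)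
  show "m_id_eps (Delta f) - f \<in> Iq q" for f by (simp add: counit_right Iq_zero)
  show "m_S_id (Delta f) - cmul (eps f) one1 \<in> Iq q" for f by (rule antipode_left)
  show "m_id_S (Delta f) - cmul (eps f) one1 \<in> Iq q" for f by (rule antipode_right)
qed

end
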